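(* Let $G$ be a locally compact group, $O$ a neighborhood of the unit, $K\subseteq G$ compact, and $F\subseteq G$ a finite set with $K\subseteq FO$ and $|F|=(K:O)$. Then for every $M\subseteq K$, $|MO^{-1}\cap F|\geq(M:O)$.
   Context: For $X\subseteq G$ and a neighborhood $O$ of the unit, $(X:O)$ denotes the minimal $n$ such that there is a set $F'\subseteq G$ with $|F'|=n$ and $X\subseteq F'O$, where $F'O=\{fo: f\in F', o\in O\}$. $MO^{-1}=\{mo^{-1}: m\in M, o\in O\}$. *)

theory Defs
  imports "HOL-Algebra.Coset" "HOL-Analysis.Analysis"
begin

definition topological_group :: "('a, 'b) monoid_scheme \<Rightarrow> 'a topology \<Rightarrow> bool" where
  "topological_group G T \<longleftrightarrow> group G \<and> topspace T = carrier G \<and>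
     continuous_map (prod_topology T T) T (\<lambda>(x, y). x \<otimes>\<^bsub>G\<^esub> y) \<and>
     continuous_map T T (\<lambda>x. inv\<^bsub>G\<^esub> x)"

definition locally_compact_group :: "('a, 'b) monoid_scheme \<Rightarrow> 'a topology \<Rightarrow> bool" where
  "locally_compact_group G T \<longleftrightarrow> topological_group G T \<and> Hausdorff_space T \<and>
     locally_compact_space T"

definition unit_nbhd :: "('a, 'b) monoid_scheme \<Rightarrow> 'a topology \<Rightarrow> 'a set \<Rightarrow> bool" where
  "unit_nbhd G T V \<longleftrightarrow> V \<subseteq> carrier G \<and> (\<exists>U. openin T U \<and> \<one>\<^bsub>G\<^esub> \<in> U \<and> U \<subseteq> V)"

definition cover_num :: "('a, 'b) monoid_scheme \<Rightarrow> 'a set \<Rightarrow> 'a set \<Rightarrow> nat" where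
  "cover_num G X V = (LEAST n. \<exists>F'. F' \<subseteq> carrier G \<and> finite F' \<and> card F' = n \<and>
                                  X \<subseteq> F' <#>\<^bsub>G\<^esub> V)"

definition mult_inv_set :: "('a, 'b) monoid_scheme \<Rightarrow> 'a set \<Rightarrow> 'a set \<Rightarrow> 'a set" where
  "mult_inv_set G M V = {m \<otimes>\<^bsub>G\<^esub> inv\<^bsub>G\<^esub> o' | m o'. m \<in> M \<and> o' \<in> V}"

end

theory Submission
  imports Defs
begin

text \<open>If \<open>m = f v\<close> with \<open>f \<in> F\<close> and \<open>v \<in> V\<close>, then \<open>f = m v\<^sup>-\<^sup>1\<close> lies in \<open>M V\<^sup>-\<^sup>1 \<inter> F\<close>;
  hence the elements of \<open>F\<close> that are actually used to cover \<open>M\<close> form a finite cover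
  of \<open>M\<close> by translates of \<open>V\<close>, and there are at least \<open>(M:V)\<close> of them.\<close>

lemma cover_num_le_card:
  assumes "F \<subseteq> carrier G" and "finite F" and "X \<subseteq> F <#>\<^bsub>G\<^esub> V"
  shows "cover_num G X V \<le> card F"
  unfolding cover_num_def using assms by (intro Least_le) blast

lemma (in group) set_mult_mult_inv_set_Int_cover:
  assumes "F \<subseteq> carrier G" and "V \<subseteq> carrier G" and "M \<subseteq> F <#> V"
  shows "M \<subseteq> (mult_inv_set G M V \<inter> F) <#> V"
proof
  fix m assume m: "m \<in> M"
  then obtain f v where f: "f \<in> F" and v: "v \<in> V" and m_eq: "m = f \<otimes> v"
    using assms(3) unfolding set_mult_def by blast
  have "f \<in> carrier G" "v \<in> carrier G"
    using f v assms(1,2) by auto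
  then have "f = m \<otimes> inv v"
    by (simp add: m_eq m_assoc)
  then have "f \<in> mult_inv_set G M V \<inter> F"
    unfolding mult_inv_set_def using m v f by blast
  then show "m \<in> (mult_inv_set G M V \<inter> F) <#> V"
    unfolding set_mult_def using v m_eq by blast
qed

theorem proposition7:
  fixes G :: "('a, 'b) monoid_scheme" and T :: "'a topology"
    and V K F :: "'a set"
  assumes "locally_compact_group G T"
    and "unit_nbhd G T V"
    and "compactin T K"
    and "F \<subseteq> carrier G" and "finite F"
    and "K \<subseteq> F <#>\<^bsub>G\<^esub> V"
    and "card F = cover_num G K V"
  shows "\<forall>M. M \<subseteq> K \<longrightarrow> card (mult_inv_set G M V \<inter> F) \<ge> cover_num G M V"
proof (intro allI impI)
  fix M assume "M \<subseteq> K"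
  have "group G"
    using assms(1) unfolding locally_compact_group_def topological_group_def by blast
  moreover have "V \<subseteq> carrier G"
    using assms(2) unfolding unit_nbhd_def by blast
  ultimately have "M \<subseteq> (mult_inv_set G M V \<inter> F) <#>\<^bsub>G\<^esub> V"
    using group.set_mult_mult_inv_set_Int_cover \<open>M \<subseteq> K\<close> assms(4,6) by blast
  then show "cover_num G M V \<le> card (mult_inv_set G M V \<inter> F)"
    using assms(4,5) by (intro cover_num_le_card) auto
qed

end
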